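(* Let $\epsilon_1>0$ be any constant and let $0<\epsilon_0\le\epsilon_1/5$. Let $S\subseteq V$ with $|S|=k'=k\cdot|V|^{-\epsilon_0/\log\log|V|}$, let $v$ be uniform in $S$, and define $X_i,Y_i,\alpha_i,\beta_i,q_i$ as in the context. If $\sum_{i=1}^n\beta_i>5\epsilon_1\log k/\log n$, then (for $n$ sufficiently large) $$\sum_{i\ \text{good}} q_i^2\ \ge\ \frac{\left(\tfrac15\epsilon_1\rho\right)^2}{n\log^2|A|}=\Omega(\rho^2/n),$$ where an index $i$ is good if $\alpha_i\ge H(q_i)-2q_i\log|A|$ and $\beta_i\ge\tfrac12\epsilon_1 q_i$.
   Context: Setting: $\psi$ is a 2CSP instance on variables $x_1,\dots,x_n$ with constant-size alphabet $A$. $\rho=\sqrt n\log\log n$, $k=\binom n\rho$. $V$ is the set of pairs $v=(T,y)$ with $T\subseteq[n]$, $|T|=\rho$, and $y:T\to A$ (so $|V|=\binom n\rho|A|^\rho$). For $v=(T,y)$ chosen uniformly at random from $S$: $X_i\in\{0,1\}$ is the indicator that $i\in T$; $Y_i=y(i)$ if $X_i=1$ and $Y_i=\bot$ (a fixed symbol) otherwise. Define $\alpha_i=H(X_i\mid X_{<i},Y_{<i})$, $\beta_i=H(Y_i\mid X_{\le i},Y_{<i})$, $q_i=\Pr[X_i=1]$, where $H$ is Shannon entropy (base 2) and $H(p)=-p\log p-(1-p)\log(1-p)$ is the binary entropy function. *)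

theory Defs
  imports "HOL-Probability.Probability"
begin

text \<open>All logarithms are base 2.  Indices of variables are 1..n.\<close>

definition rho :: "nat \<Rightarrow> nat" where
  "rho n = nat \<lfloor>sqrt (real n) * log 2 (log 2 (real n))\<rfloor>"

definition kk :: "nat \<Rightarrow> nat" where
  "kk n = n choose (rho n)"

text \<open>V: pairs (T, y), T a rho-subset of [n], y : T -> A (extensional).\<close>
definition Vset :: "nat \<Rightarrow> 'a set \<Rightarrow> (nat set \<times> (nat \<Rightarrow> 'a)) set" where
  "Vset n A = {(T, y). T \<subseteq> {1..n} \<and> card T = rho n \<and> y \<in> T \<rightarrow>\<^sub>E A}"

definition kprime :: "real \<Rightarrow> nat \<Rightarrow> 'a set \<Rightarrow> real" where
  "kprime eps0 n A = real (kk n) *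
     real (card (Vset n A)) powr (- eps0 / log 2 (log 2 (real (card (Vset n A)))))"

definition shannon :: "'b pmf \<Rightarrow> real" where
  "shannon p = - (\<Sum>z\<in>set_pmf p. pmf p z * log 2 (pmf p z))"

definition cond_H :: "'v pmf \<Rightarrow> ('v \<Rightarrow> 'b) \<Rightarrow> ('v \<Rightarrow> 'c) \<Rightarrow> real" where
  "cond_H M Z W = (\<Sum>w\<in>set_pmf (map_pmf W M).
      pmf (map_pmf W M) w * shannon (map_pmf Z (cond_pmf M {v. W v = w})))"

definition bin_H :: "real \<Rightarrow> real" where
  "bin_H p = - p * log 2 p - (1 - p) * log 2 (1 - p)"

text \<open>Random variables on v = (T, y).  Y_i = None plays the role of the symbol bottom.\<close>
definition Xv :: "nat \<Rightarrow> nat set \<times> (nat \<Rightarrow> 'a) \<Rightarrow> nat" where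
  "Xv i v = (if i \<in> fst v then 1 else 0)"

definition Yv :: "nat \<Rightarrow> nat set \<times> (nat \<Rightarrow> 'a) \<Rightarrow> 'a option" where
  "Yv i v = (if i \<in> fst v then Some (snd v i) else None)"

definition prefXY :: "nat \<Rightarrow> nat set \<times> (nat \<Rightarrow> 'a) \<Rightarrow> (nat \<times> 'a option) list" where
  "prefXY i v = map (\<lambda>j. (Xv j v, Yv j v)) [1..<i]"

definition alpha :: "(nat set \<times> (nat \<Rightarrow> 'a)) set \<Rightarrow> nat \<Rightarrow> real" where
  "alpha S i = cond_H (pmf_of_set S) (Xv i) (prefXY i)"

definition beta :: "(nat set \<times> (nat \<Rightarrow> 'a)) set \<Rightarrow> nat \<Rightarrow> real" where
  "beta S i = cond_H (pmf_of_set S) (Yv i) (\<lambda>v. (Xv i v, prefXY i v))"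

definition qq :: "(nat set \<times> (nat \<Rightarrow> 'a)) set \<Rightarrow> nat \<Rightarrow> real" where
  "qq S i = measure_pmf.prob (pmf_of_set S) {v. Xv i v = 1}"

definition good :: "real \<Rightarrow> 'a set \<Rightarrow> (nat set \<times> (nat \<Rightarrow> 'a)) set \<Rightarrow> nat \<Rightarrow> bool" where
  "good eps1 A S i \<longleftrightarrow>
     alpha S i \<ge> bin_H (qq S i) - 2 * qq S i * log 2 (real (card A)) \<and>
     beta S i \<ge> eps1 / 2 * qq S i"

end

theory Submission
  imports Defs "HOL-Real_Asymp.Real_Asymp"
begin

text \<open>By the chain rule the sum of all alpha i + beta i telescopes to H(v) = log |S|, which the
  size assumption bounds below by log k - eps0 log |V| / log log |V|. Since
  alpha i \<le> H(X i) = H(q i) and beta i \<le> q i log |A|, every index satisfies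
  2 beta i \<le> (H(q i) - alpha i) + [i good] 2 q i log |A| + eps1 q i. Summing, and using
  \<Sum> H(q i) \<le> n H(rho / n) \<le> log k + log (n + 1) (concavity and the mode of the binomial
  distribution), the assumption on \<Sum> beta i forces log |A| times the sum of q i over the good i
  to be at least eps1 rho / 5 for large n; Cauchy-Schwarz over the at most n good indices finishes the proof.\<close>

section \<open>Entropy under a uniform distribution\<close>

definition fiber_card :: "'v set \<Rightarrow> ('v \<Rightarrow> 'b) \<Rightarrow> 'v \<Rightarrow> nat" where
  "fiber_card S W v = card {u\<in>S. W u = W v}"

text \<open>Entropy of W when v is uniform on S: the average of log (1 / Pr[W = W v]).\<close>
definition unif_entropy :: "'v set \<Rightarrow> ('v \<Rightarrow> 'b) \<Rightarrow> real" where
  "unif_entropy S W = (\<Sum>v\<in>S. log 2 (card S / fiber_card S W v)) / card S"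

lemma fiber_card_pos: "finite S \<Longrightarrow> v \<in> S \<Longrightarrow> 0 < fiber_card S W v"
  unfolding fiber_card_def by (subst card_gt_0_iff) auto

lemma fiber_card_eq_card_fiber: "v \<in> {u\<in>S. W u = w} \<Longrightarrow> fiber_card S W v = card {u\<in>S. W u = w}"
  unfolding fiber_card_def by simp

lemma sum_fiber_card:
  fixes f :: "nat \<Rightarrow> real"
  assumes "finite S"
  shows "(\<Sum>v\<in>S. f (fiber_card S W v)) =
    (\<Sum>w\<in>W ` S. real (card {v\<in>S. W v = w}) * f (card {v\<in>S. W v = w}))"
  unfolding sum.image_gen[OF assms, of "\<lambda>v. f (fiber_card S W v)" W]
  by (intro sum.cong refl) (simp add: fiber_card_eq_card_fiber)

lemma unif_entropy_cong:
  assumes "\<And>u v. u \<in> S \<Longrightarrow> v \<in> S \<Longrightarrow> W u = W v \<longleftrightarrow> W' u = W' v"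
  shows "unif_entropy S W = unif_entropy S W'"
proof -
  have "fiber_card S W v = fiber_card S W' v" if "v \<in> S" for v
    unfolding fiber_card_def using assms that by (metis (no_types, lifting) mem_Collect_eq)
  then show ?thesis unfolding unif_entropy_def by (simp cong: sum.cong)
qed

lemma unif_entropy_const: "unif_entropy S (\<lambda>v. c) = 0"
  unfolding unif_entropy_def fiber_card_def by simp

lemma unif_entropy_inj:
  assumes "finite S" "S \<noteq> {}" "inj_on W S"
  shows "unif_entropy S W = log 2 (card S)"
proof -
  have "fiber_card S W v = 1" if "v \<in> S" for v
  proof -
    have "{u\<in>S. W u = W v} = {v}" using assms(3) that by (auto dest: inj_onD)
    then show ?thesis unfolding fiber_card_def by simp
  qed
  then show ?thesis using assms unfolding unif_entropy_def by simp
qed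

lemma shannon_map_pmf_of_set:
  assumes "finite S" "S \<noteq> {}"
  shows "shannon (map_pmf Z (pmf_of_set S)) = unif_entropy S Z"
proof -
  let ?N = "real (card S)" and ?c = "\<lambda>z. real (card {v\<in>S. Z v = z})"
  have N: "?N > 0" using assms by (simp add: card_gt_0_iff)
  have c: "?c z > 0" if "z \<in> Z ` S" for z using that assms by (auto simp: card_gt_0_iff)
  have pmf: "pmf (map_pmf Z (pmf_of_set S)) z = ?c z / ?N" for z
    using assms by (simp add: pmf_map measure_pmf_of_set Int_def vimage_def)
  have "shannon (map_pmf Z (pmf_of_set S)) = (\<Sum>z\<in>Z ` S. - (?c z / ?N * log 2 (?c z / ?N)))"
    unfolding shannon_def using assms by (simp add: pmf sum_negf)
  also have "\<dots> = (\<Sum>z\<in>Z ` S. ?c z * log 2 (?N / ?c z)) / ?N"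
    unfolding sum_divide_distrib using N c by (intro sum.cong) (simp_all add: log_divide field_simps)
  also have "(\<Sum>z\<in>Z ` S. ?c z * log 2 (?N / ?c z)) = (\<Sum>v\<in>S. log 2 (?N / fiber_card S Z v))"
    using sum_fiber_card[OF assms(1), of "\<lambda>m. log 2 (?N / m)" Z] by simp
  finally show ?thesis unfolding unif_entropy_def .
qed

lemma cond_pmf_pmf_of_set:
  assumes "finite S" "w \<in> W ` S"
  shows "cond_pmf (pmf_of_set S) {v. W v = w} = pmf_of_set {v\<in>S. W v = w}"
proof (rule pmf_eqI)
  fix x
  have ne: "S \<noteq> {}" "{v\<in>S. W v = w} \<noteq> {}" using assms by auto
  then have "set_pmf (pmf_of_set S) \<inter> {v. W v = w} \<noteq> {}" using assms by auto
  with ne show "pmf (cond_pmf (pmf_of_set S) {v. W v = w}) x = pmf (pmf_of_set {v\<in>S. W v = w}) x"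
    using pmf_cond[of "pmf_of_set S" "{v. W v = w}" x] assms
    by (auto simp: measure_pmf_of_set Int_def indicator_def card_gt_0_iff)
qed

lemma cond_H_pmf_of_set:
  assumes "finite S" "S \<noteq> {}"
  shows "cond_H (pmf_of_set S) Z W =
     (\<Sum>w\<in>W ` S. card {v\<in>S. W v = w} / card S * unif_entropy {v\<in>S. W v = w} Z)"
proof -
  have "pmf (map_pmf W (pmf_of_set S)) w = card {v\<in>S. W v = w} / card S" for w
    using assms by (simp add: pmf_map measure_pmf_of_set Int_def vimage_def)
  moreover have "shannon (map_pmf Z (cond_pmf (pmf_of_set S) {v. W v = w})) =
      unif_entropy {v\<in>S. W v = w} Z" if "w \<in> W ` S" for w
  proof -
    have "{v\<in>S. W v = w} \<noteq> {}" using that by auto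
    then show ?thesis
      using assms by (simp add: cond_pmf_pmf_of_set[OF assms(1) that] shannon_map_pmf_of_set)
  qed
  ultimately show ?thesis unfolding cond_H_def using assms by (simp cong: sum.cong)
qed

lemma cond_H_pmf_of_set_eq_diff:
  assumes "finite S" "S \<noteq> {}"
  shows "cond_H (pmf_of_set S) Z W = unif_entropy S (\<lambda>v. (W v, Z v)) - unif_entropy S W"
proof -
  let ?N = "real (card S)" and ?WZ = "\<lambda>v. (W v, Z v)"
  let ?d = "\<lambda>v. log 2 (?N / fiber_card S ?WZ v) - log 2 (?N / fiber_card S W v)"
  have N: "?N > 0" using assms by (simp add: card_gt_0_iff)
  have fiber: "card {v\<in>S. W v = w} / ?N * unif_entropy {v\<in>S. W v = w} Z
      = (\<Sum>v\<in>{v\<in>S. W v = w}. ?d v) / ?N" if "w \<in> W ` S" for w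
  proof -
    let ?F = "{v\<in>S. W v = w}"
    have F: "card ?F > 0" using that assms by (auto simp: card_gt_0_iff)
    have "log 2 (card ?F / fiber_card ?F Z v) = ?d v" if v: "v \<in> ?F" for v
    proof -
      have "{u\<in>?F. Z u = Z v} = {u\<in>S. ?WZ u = ?WZ v}" "?F = {u\<in>S. W u = W v}"
        using v by auto
      then have "fiber_card ?F Z v = fiber_card S ?WZ v" "card ?F = fiber_card S W v"
        unfolding fiber_card_def by simp_all
      moreover have "0 < fiber_card S ?WZ v"
        using v by (intro fiber_card_pos[OF assms(1)]) simp
      ultimately show ?thesis using F N by (simp add: log_divide)
    qed
    then show ?thesis unfolding unif_entropy_def using F by simp
  qed
  have "cond_H (pmf_of_set S) Z W = (\<Sum>w\<in>W ` S. (\<Sum>v\<in>{v\<in>S. W v = w}. ?d v) / ?N)"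
    unfolding cond_H_pmf_of_set[OF assms] by (intro sum.cong refl fiber)
  also have "\<dots> = (\<Sum>w\<in>W ` S. \<Sum>v\<in>{v\<in>S. W v = w}. ?d v) / ?N"
    by (simp add: sum_divide_distrib)
  also have "(\<Sum>w\<in>W ` S. \<Sum>v\<in>{v\<in>S. W v = w}. ?d v) = (\<Sum>v\<in>S. ?d v)"
    by (rule sum.image_gen[OF assms(1), symmetric])
  finally show ?thesis unfolding unif_entropy_def by (simp add: sum_subtractf diff_divide_distrib)
qed

lemma log2_le_minus_one: "0 < x \<Longrightarrow> log 2 x \<le> (x - 1) / ln 2"
  unfolding log_def using ln_le_minus_one[of x] by (simp add: divide_right_mono)

lemma unif_entropy_le_log_card_image:
  assumes "finite S" "S \<noteq> {}"
  shows "unif_entropy S Z \<le> log 2 (card (Z ` S))"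
proof -
  let ?N = "real (card S)" and ?m = "real (card (Z ` S))"
  have N: "?N > 0" and m: "?m > 0" using assms by (simp_all add: card_gt_0_iff)
  have "(\<Sum>v\<in>S. log 2 (?N / fiber_card S Z v) - log 2 ?m)
      \<le> (\<Sum>v\<in>S. (?N / (fiber_card S Z v * ?m) - 1) / ln 2)"
  proof (rule sum_mono)
    fix v assume "v \<in> S"
    then have c: "real (fiber_card S Z v) > 0" using fiber_card_pos[OF assms(1)] by simp
    have "log 2 (?N / fiber_card S Z v) - log 2 ?m = log 2 (?N / (fiber_card S Z v * ?m))"
      using N c m by (simp add: log_divide log_mult)
    also have "\<dots> \<le> (?N / (fiber_card S Z v * ?m) - 1) / ln 2"
      using N c m by (intro log2_le_minus_one) simp
    finally show "log 2 (?N / fiber_card S Z v) - log 2 ?m \<le> (?N / (fiber_card S Z v * ?m) - 1) / ln 2" .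
  qed
  also have "\<dots> = ((\<Sum>v\<in>S. ?N / (fiber_card S Z v * ?m)) - ?N) / ln 2"
    by (simp add: sum_divide_distrib[symmetric] sum_subtractf)
  also have "(\<Sum>v\<in>S. ?N / (fiber_card S Z v * ?m)) = ?N"
  proof -
    have "(\<Sum>v\<in>S. ?N / (fiber_card S Z v * ?m)) = (\<Sum>z\<in>Z ` S. ?N / ?m)"
      unfolding sum_fiber_card[OF assms(1), of "\<lambda>c. ?N / (c * ?m)"]
    proof (intro sum.cong refl)
      fix z assume "z \<in> Z ` S"
      then have "card {v\<in>S. Z v = z} > 0" using assms by (auto simp: card_gt_0_iff)
      then show "card {v\<in>S. Z v = z} * (?N / (card {v\<in>S. Z v = z} * ?m)) = ?N / ?m" by simp
    qed
    then show ?thesis using m by simp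
  qed
  finally have "(\<Sum>v\<in>S. log 2 (?N / fiber_card S Z v)) - ?N * log 2 ?m \<le> 0"
    by (simp add: sum_subtractf)
  then show ?thesis unfolding unif_entropy_def using N by (simp add: divide_le_eq mult.commute)
qed

lemma sum_fiber_card_ratio_le:
  assumes "finite S"
  shows "(\<Sum>v\<in>S. fiber_card S W v * fiber_card S Z v / (card S * fiber_card S (\<lambda>v. (W v, Z v)) v))
    \<le> card S"
proof (cases "S = {}")
  case False
  let ?N = "real (card S)" and ?WZ = "\<lambda>v. (W v, Z v)" and ?c = "\<lambda>U w. real (card {v\<in>S. U v = w})"
  let ?x = "\<lambda>v. fiber_card S W v * fiber_card S Z v / (?N * fiber_card S ?WZ v)"
  have "(\<Sum>v\<in>S. ?x v) = (\<Sum>p\<in>?WZ ` S. \<Sum>v\<in>{v\<in>S. ?WZ v = p}. ?x v)"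
    by (rule sum.image_gen[OF assms])
  also have "\<dots> = (\<Sum>p\<in>?WZ ` S. ?c W (fst p) * ?c Z (snd p) / ?N)"
  proof (rule sum.cong[OF refl])
    fix p assume "p \<in> ?WZ ` S"
    then have cp: "card {v\<in>S. ?WZ v = p} > 0" using assms by (auto simp: card_gt_0_iff)
    have "(\<Sum>v\<in>{v\<in>S. ?WZ v = p}. ?x v)
        = (\<Sum>v\<in>{v\<in>S. ?WZ v = p}. ?c W (fst p) * ?c Z (snd p) / (?N * card {v\<in>S. ?WZ v = p}))"
      by (rule sum.cong) (auto simp: fiber_card_def)
    then show "(\<Sum>v\<in>{v\<in>S. ?WZ v = p}. ?x v) = ?c W (fst p) * ?c Z (snd p) / ?N"
      using cp by simp
  qed
  also have "\<dots> \<le> (\<Sum>p\<in>W ` S \<times> Z ` S. ?c W (fst p) * ?c Z (snd p) / ?N)"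
    by (rule sum_mono2) (use assms in auto)
  also have "\<dots> = (\<Sum>w\<in>W ` S. ?c W w) * (\<Sum>z\<in>Z ` S. ?c Z z) / ?N"
    by (simp add: sum.cartesian_product' sum_product sum_divide_distrib)
  also have "\<dots> = ?N"
    using sum.image_gen[OF assms, of "\<lambda>_. 1::real" W] sum.image_gen[OF assms, of "\<lambda>_. 1::real" Z] False
    by (simp add: card_gt_0_iff assms)
  finally show ?thesis by simp
qed simp

text \<open>Gibbs' inequality, log x \<le> (x - 1) / ln 2 at x = Pr[W] Pr[Z] / Pr[W, Z], summed over S.\<close>
lemma unif_entropy_pair_le:
  assumes "finite S" "S \<noteq> {}"
  shows "unif_entropy S (\<lambda>v. (W v, Z v)) \<le> unif_entropy S W + unif_entropy S Z"
proof -
  let ?N = "real (card S)" and ?WZ = "\<lambda>v. (W v, Z v)"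
  let ?x = "\<lambda>v. fiber_card S W v * fiber_card S Z v / (?N * fiber_card S ?WZ v)"
  have N: "?N > 0" using assms by (simp add: card_gt_0_iff)
  have pointwise: "(1 - ?x v) / ln 2 \<le>
      log 2 (?N / fiber_card S W v) + log 2 (?N / fiber_card S Z v) - log 2 (?N / fiber_card S ?WZ v)"
    if "v \<in> S" for v
  proof -
    have c: "real (fiber_card S W v) > 0" "real (fiber_card S Z v) > 0" "real (fiber_card S ?WZ v) > 0"
      using fiber_card_pos[OF assms(1) that] by auto
    then have "log 2 (?N / fiber_card S W v) + log 2 (?N / fiber_card S Z v) - log 2 (?N / fiber_card S ?WZ v)
        = - log 2 (?x v)"
      using N by (simp add: log_divide log_mult)
    moreover have "log 2 (?x v) \<le> (?x v - 1) / ln 2" using c N by (intro log2_le_minus_one) simp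
    moreover have "(1 - ?x v) / ln 2 = - ((?x v - 1) / ln 2)" by (simp add: field_simps)
    ultimately show ?thesis by linarith
  qed
  have "0 \<le> (\<Sum>v\<in>S. (1 - ?x v) / ln 2)"
    using sum_fiber_card_ratio_le[OF assms(1), of W Z]
    by (simp add: sum_divide_distrib[symmetric] sum_subtractf)
  also have "\<dots> \<le> (\<Sum>v\<in>S. log 2 (?N / fiber_card S W v) + log 2 (?N / fiber_card S Z v)
      - log 2 (?N / fiber_card S ?WZ v))"
    using pointwise by (rule sum_mono)
  finally show ?thesis unfolding unif_entropy_def using N
    by (simp add: sum_subtractf sum.distrib divide_simps)
qed

lemma cond_H_pmf_of_set_le:
  assumes "finite S" "S \<noteq> {}" "finite B"
    and in_B: "\<And>v. v \<in> S \<Longrightarrow> P (W v) \<Longrightarrow> Z v \<in> B"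
    and determined: "\<And>u v. u \<in> S \<Longrightarrow> v \<in> S \<Longrightarrow> W u = W v \<Longrightarrow> \<not> P (W v) \<Longrightarrow> Z u = Z v"
  shows "cond_H (pmf_of_set S) Z W \<le> card {v\<in>S. P (W v)} / card S * log 2 (card B)"
proof -
  let ?N = "real (card S)" and ?F = "\<lambda>w. {v\<in>S. W v = w}"
  let ?g = "\<lambda>w. if P w then log 2 (card B) else 0"
  have fiber: "unif_entropy (?F w) Z \<le> ?g w" if "w \<in> W ` S" for w
  proof -
    have F: "finite (?F w)" "?F w \<noteq> {}" using assms(1) that by auto
    then have "0 < card (Z ` ?F w)" by (simp add: card_gt_0_iff)
    moreover have "card (Z ` ?F w) \<le> (if P w then card B else 1)"
    proof (cases "P w")
      case True
      then have "Z ` ?F w \<subseteq> B" using in_B by auto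
      then show ?thesis using True assms(3) by (simp add: card_mono)
    next
      case False
      obtain v where v: "v \<in> ?F w" using F(2) by blast
      have "Z ` ?F w \<subseteq> {Z v}"
        using determined v False by auto
      then have "card (Z ` ?F w) \<le> card {Z v}" by (intro card_mono) auto
      then show ?thesis using False by simp
    qed
    ultimately have "log 2 (card (Z ` ?F w)) \<le> ?g w" by (cases "P w") auto
    then show ?thesis using unif_entropy_le_log_card_image[OF F, of Z] by linarith
  qed
  have "cond_H (pmf_of_set S) Z W \<le> (\<Sum>w\<in>W ` S. card (?F w) / ?N * ?g w)"
    unfolding cond_H_pmf_of_set[OF assms(1,2)] using fiber by (intro sum_mono mult_left_mono) auto
  also have "\<dots> = (\<Sum>w\<in>W ` S. if P w then real (card (?F w)) else 0) / ?N * log 2 (card B)"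
    by (simp add: sum_divide_distrib sum_distrib_right) (intro sum.cong refl; simp)
  also have "(\<Sum>w\<in>W ` S. if P w then real (card (?F w)) else 0) = real (card {v\<in>S. P (W v)})"
  proof -
    have "real (card {v\<in>S. P (W v)}) = (\<Sum>v\<in>S. if P (W v) then 1 else 0)"
      using assms(1) by (simp add: sum.If_cases Int_def)
    also have "\<dots> = (\<Sum>w\<in>W ` S. \<Sum>v\<in>?F w. if P (W v) then 1 else 0)"
      by (rule sum.image_gen[OF assms(1)])
    also have "\<dots> = (\<Sum>w\<in>W ` S. if P w then real (card (?F w)) else 0)"
      by (intro sum.cong refl) simp
    finally show ?thesis ..
  qed
  finally show ?thesis .
qed

lemma neg_mult_log2_le:
  assumes "0 \<le> q" "0 < p"
  shows "- q * log 2 q \<le> - q * log 2 p + (p - q) / ln 2"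
proof (cases "q = 0")
  case False
  then have q: "q > 0" using assms by simp
  have "log 2 (p / q) \<le> (p / q - 1) / ln 2" using q assms by (intro log2_le_minus_one) simp
  then have "q * log 2 (p / q) \<le> q * ((p / q - 1) / ln 2)" using q by (intro mult_left_mono) auto
  also have "\<dots> = (p - q) / ln 2" using q by (simp add: field_simps)
  finally show ?thesis using q assms by (simp add: log_divide algebra_simps)
qed (use assms in simp)

lemma bin_H_le_cross_entropy:
  assumes "0 \<le> q" "q \<le> 1" "0 < p" "p < 1"
  shows "bin_H q \<le> - q * log 2 p - (1 - q) * log 2 (1 - p)"
proof -
  have "- q * log 2 q \<le> - q * log 2 p + (p - q) / ln 2"
      "- (1 - q) * log 2 (1 - q) \<le> - (1 - q) * log 2 (1 - p) + ((1 - p) - (1 - q)) / ln 2"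
    using assms by (intro neg_mult_log2_le; simp)+
  moreover have "(p - q) / ln 2 + ((1 - p) - (1 - q)) / ln 2 = 0" by (simp add: field_simps)
  ultimately show ?thesis unfolding bin_H_def by linarith
qed

lemma sum_bin_H_le:
  fixes q :: "'i \<Rightarrow> real" and p :: real
  assumes "\<And>i. i \<in> I \<Longrightarrow> 0 \<le> q i \<and> q i \<le> 1" "0 < p" "p < 1" "(\<Sum>i\<in>I. q i) = card I * p"
  shows "(\<Sum>i\<in>I. bin_H (q i)) \<le> card I * bin_H p"
proof -
  have "(\<Sum>i\<in>I. bin_H (q i)) \<le> (\<Sum>i\<in>I. - q i * log 2 p - (1 - q i) * log 2 (1 - p))"
    using assms by (intro sum_mono bin_H_le_cross_entropy) auto
  also have "\<dots> = - (\<Sum>i\<in>I. q i) * log 2 p - (card I - (\<Sum>i\<in>I. q i)) * log 2 (1 - p)"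
    by (simp add: sum_subtractf sum_negf sum_distrib_right left_diff_distrib)
  also have "\<dots> = card I * bin_H p"
    unfolding assms(4) bin_H_def by (simp add: algebra_simps)
  finally show ?thesis .
qed

lemma unif_entropy_binary:
  assumes "finite S" "S \<noteq> {}" "\<And>v. v \<in> S \<Longrightarrow> Z v \<in> {0, 1::nat}"
  shows "unif_entropy S Z = bin_H (card {v\<in>S. Z v = 1} / card S)"
proof -
  let ?N = "real (card S)" and ?c = "\<lambda>y. real (card {v\<in>S. Z v = y})"
  have N: "?N > 0" using assms by (simp add: card_gt_0_iff)
  have "S = {v\<in>S. Z v = 0} \<union> {v\<in>S. Z v = 1}" using assms(3) by auto
  then have "card S = card ({v\<in>S. Z v = 0} \<union> {v\<in>S. Z v = 1})" by simp
  also have "\<dots> = card {v\<in>S. Z v = 0} + card {v\<in>S. Z v = 1}"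
    by (rule card_Un_disjoint) (use assms(1) in auto)
  finally have c0: "1 - ?c 1 / ?N = ?c 0 / ?N" using N by (simp add: field_simps)
  have xlogx: "?c y * log 2 (?N / ?c y) / ?N = - (?c y / ?N) * log 2 (?c y / ?N)" for y
    using N by (cases "?c y = 0") (simp_all add: log_divide field_simps)
  have "Z ` S \<subseteq> {0, 1}" by (rule image_subsetI) (rule assms(3))
  moreover have "?c z = 0" if "z \<notin> Z ` S" for z
  proof -
    have "{v\<in>S. Z v = z} = {}" using that by auto
    then show ?thesis by (metis card.empty of_nat_0)
  qed
  ultimately have "(\<Sum>z\<in>Z ` S. ?c z * log 2 (?N / ?c z)) = (\<Sum>z\<in>{0, 1}. ?c z * log 2 (?N / ?c z))"
    by (intro sum.mono_neutral_left) auto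
  then have "unif_entropy S Z = (\<Sum>z\<in>{0, 1::nat}. ?c z * log 2 (?N / ?c z)) / ?N"
    unfolding unif_entropy_def sum_fiber_card[OF assms(1), of "\<lambda>c. log 2 (?N / c)"] by simp
  also have "\<dots> = bin_H (?c 1 / ?N)"
    unfolding bin_H_def c0 by (simp add: add_divide_distrib xlogx)
  finally show ?thesis .
qed

section \<open>The uniform distribution on a subset of V\<close>

lemma mem_VsetD:
  "v \<in> Vset n A \<Longrightarrow> fst v \<subseteq> {1..n} \<and> card (fst v) = rho n \<and> snd v \<in> fst v \<rightarrow>\<^sub>E A"
  by (cases v) (simp add: Vset_def)

lemma finite_Vset: "finite A \<Longrightarrow> finite (Vset n A)"
proof -
  assume "finite A"
  have "Vset n A \<subseteq> (SIGMA T:Pow {1..n}. T \<rightarrow>\<^sub>E A)"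
    unfolding Vset_def by auto
  moreover from \<open>finite A\<close> have "finite (SIGMA T:Pow {1..n}. T \<rightarrow>\<^sub>E A)"
    by (intro finite_SigmaI finite_PiE) (auto intro: finite_subset)
  ultimately show ?thesis by (rule finite_subset)
qed

lemma card_Vset:
  assumes "finite A"
  shows "card (Vset n A) = kk n * card A ^ rho n"
proof -
  let ?\<T> = "{T. T \<subseteq> {1..n} \<and> card T = rho n}"
  have fin: "finite T" if "T \<in> ?\<T>" for T
    using that finite_subset by blast
  have "Vset n A = (SIGMA T:?\<T>. T \<rightarrow>\<^sub>E A)"
    unfolding Vset_def by auto
  also have "card \<dots> = (\<Sum>T\<in>?\<T>. card (T \<rightarrow>\<^sub>E A))"
    using assms fin by (intro card_SigmaI) (auto intro: finite_PiE)
  also have "\<dots> = (\<Sum>T\<in>?\<T>. card A ^ rho n)"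
    using fin by (intro sum.cong refl) (simp add: card_PiE)
  also have "\<dots> = kk n * card A ^ rho n"
    using n_subsets[of "{1..n}" "rho n"] by (simp add: kk_def)
  finally show ?thesis .
qed

lemma Vset_eqI:
  assumes "u \<in> Vset n A" "v \<in> Vset n A" "\<And>j. j \<in> {1..n} \<Longrightarrow> Yv j u = Yv j v"
  shows "u = v"
proof -
  have u: "fst u \<subseteq> {1..n}" "snd u \<in> fst u \<rightarrow>\<^sub>E A" and v: "fst v \<subseteq> {1..n}" "snd v \<in> fst v \<rightarrow>\<^sub>E A"
    using mem_VsetD[OF assms(1)] mem_VsetD[OF assms(2)] by simp_all
  have "j \<in> fst u \<longleftrightarrow> j \<in> fst v" for j
  proof (cases "j \<in> {1..n}")
    case True
    from assms(3)[OF True] show ?thesis unfolding Yv_def by (metis option.distinct(1))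
  next
    case False
    then show ?thesis using u(1) v(1) by blast
  qed
  then have T: "fst u = fst v" by auto
  have "snd u j = snd v j" for j
  proof (cases "j \<in> fst u")
    case True
    then have "j \<in> {1..n}" "j \<in> fst v" using u(1) T by auto
    with True show ?thesis using assms(3)[of j] unfolding Yv_def by simp
  next
    case False
    then show ?thesis using PiE_arb[OF u(2)] PiE_arb[OF v(2)] T by simp
  qed
  then have "snd u = snd v" ..
  with T show ?thesis by (simp add: prod_eq_iff)
qed

lemma inj_on_prefXY:
  assumes "S \<subseteq> Vset n A"
  shows "inj_on (prefXY (Suc n)) S"
proof (rule inj_onI)
  fix u v assume "u \<in> S" "v \<in> S" and eq: "prefXY (Suc n) u = prefXY (Suc n) v"
  show "u = v"
  proof (rule Vset_eqI)
    show "u \<in> Vset n A" "v \<in> Vset n A" using \<open>u \<in> S\<close> \<open>v \<in> S\<close> assms by auto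
    fix j assume "j \<in> {1..n}"
    then have "j \<in> set [1..<Suc n]" by auto
    then show "Yv j u = Yv j v" using eq unfolding prefXY_def map_eq_conv by fastforce
  qed
qed

lemma prefXY_Suc: "1 \<le> i \<Longrightarrow> prefXY (Suc i) v = prefXY i v @ [(Xv i v, Yv i v)]"
  unfolding prefXY_def by simp

lemma qq_nonneg: "0 \<le> qq S i" and qq_le_one: "qq S i \<le> 1"
  unfolding qq_def by simp_all

context
  fixes S :: "(nat set \<times> (nat \<Rightarrow> 'a)) set"
  assumes finite_S: "finite S" and S_ne: "S \<noteq> {}"
begin

lemma alpha_eq_entropy_diff:
  "alpha S i = unif_entropy S (\<lambda>v. (prefXY i v, Xv i v)) - unif_entropy S (prefXY i)"
  unfolding alpha_def cond_H_pmf_of_set_eq_diff[OF finite_S S_ne] ..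

lemma beta_eq_entropy_diff:
  "beta S i = unif_entropy S (\<lambda>v. ((Xv i v, prefXY i v), Yv i v))
    - unif_entropy S (\<lambda>v. (Xv i v, prefXY i v))"
  unfolding beta_def cond_H_pmf_of_set_eq_diff[OF finite_S S_ne] ..

lemma alpha_plus_beta:
  assumes "1 \<le> i"
  shows "alpha S i + beta S i = unif_entropy S (prefXY (Suc i)) - unif_entropy S (prefXY i)"
proof -
  have "unif_entropy S (\<lambda>v. (Xv i v, prefXY i v)) = unif_entropy S (\<lambda>v. (prefXY i v, Xv i v))"
    by (rule unif_entropy_cong) auto
  moreover have "unif_entropy S (\<lambda>v. ((Xv i v, prefXY i v), Yv i v)) = unif_entropy S (prefXY (Suc i))"
    by (rule unif_entropy_cong) (auto simp: prefXY_Suc[OF assms])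
  ultimately show ?thesis using alpha_eq_entropy_diff beta_eq_entropy_diff by simp
qed

lemma sum_alpha_plus_beta: "(\<Sum>i=1..n. alpha S i + beta S i) = unif_entropy S (prefXY (Suc n))"
proof -
  have "unif_entropy S (prefXY 1) = unif_entropy S (\<lambda>v. [] :: (nat \<times> 'a option) list)"
    by (rule unif_entropy_cong) (simp add: prefXY_def)
  then have "unif_entropy S (prefXY 1) = 0" by (simp add: unif_entropy_const)
  moreover have "(\<Sum>i=1..n. alpha S i + beta S i) =
      (\<Sum>i=1..n. unif_entropy S (prefXY (Suc i)) - unif_entropy S (prefXY i))"
    by (intro sum.cong refl) (simp add: alpha_plus_beta)
  moreover have "\<dots> = unif_entropy S (prefXY (Suc n)) - unif_entropy S (prefXY 1)"
    by (rule sum_Suc_diff) simp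
  ultimately show ?thesis by simp
qed

lemma qq_pmf_of_set: "qq S i = card {v\<in>S. i \<in> fst v} / card S"
proof -
  have "S \<inter> {v. Xv i v = 1} = {v\<in>S. i \<in> fst v}" by (auto simp: Xv_def)
  then show ?thesis unfolding qq_def measure_pmf_of_set[OF S_ne finite_S] by simp
qed

lemma alpha_le_bin_H: "alpha S i \<le> bin_H (qq S i)"
proof -
  have "unif_entropy S (Xv i) = bin_H (qq S i)"
  proof -
    have "{v\<in>S. Xv i v = 1} = {v\<in>S. i \<in> fst v}" by (auto simp: Xv_def)
    then show ?thesis
      using unif_entropy_binary[OF finite_S S_ne, of "Xv i"] by (simp add: Xv_def qq_pmf_of_set)
  qed
  then show ?thesis
    using alpha_eq_entropy_diff unif_entropy_pair_le[OF finite_S S_ne, of "prefXY i" "Xv i"] by simp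
qed

end

context
  fixes S :: "(nat set \<times> (nat \<Rightarrow> 'a)) set" and n :: nat and A :: "'a set"
  assumes S_sub: "S \<subseteq> Vset n A" and finite_A: "finite A" and S_ne: "S \<noteq> {}"
begin

lemma finite_subset_Vset: "finite S"
  using finite_subset[OF S_sub finite_Vset[OF finite_A]] .

lemma sum_alpha_plus_beta_eq_log_card: "(\<Sum>i=1..n. alpha S i + beta S i) = log 2 (card S)"
  using sum_alpha_plus_beta[OF finite_subset_Vset S_ne]
    unif_entropy_inj[OF finite_subset_Vset S_ne inj_on_prefXY[OF S_sub]] by simp

lemma beta_le_qq_log_card: "beta S i \<le> qq S i * log 2 (card A)"
proof -
  have "beta S i \<le> card {v\<in>S. fst (Xv i v, prefXY i v) = 1} / card S * log 2 (card (Some ` A))"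
    unfolding beta_def
  proof (rule cond_H_pmf_of_set_le[OF finite_subset_Vset S_ne])
    show "Yv i v \<in> Some ` A" if "v \<in> S" "fst (Xv i v, prefXY i v) = 1" for v
    proof -
      have "i \<in> fst v" using that(2) by (simp add: Xv_def split: if_splits)
      moreover have "v \<in> Vset n A" using S_sub that(1) by blast
      ultimately have "snd v i \<in> A" using mem_VsetD[of v n A] by blast
      then show ?thesis using \<open>i \<in> fst v\<close> by (simp add: Yv_def)
    qed
    show "Yv i u = Yv i v" if "(Xv i u, prefXY i u) = (Xv i v, prefXY i v)"
      "\<not> fst (Xv i v, prefXY i v) = 1" for u v :: "nat set \<times> (nat \<Rightarrow> 'a)"
    proof -
      have "i \<notin> fst u" "i \<notin> fst v" using that by (simp_all add: Xv_def split: if_splits)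
      then show ?thesis by (simp add: Yv_def)
    qed
  qed (use finite_A in simp)
  also have "{v\<in>S. fst (Xv i v, prefXY i v) = 1} = {v\<in>S. i \<in> fst v}"
    by (auto simp: Xv_def)
  finally show ?thesis by (simp add: qq_pmf_of_set[OF finite_subset_Vset S_ne] card_image)
qed

lemma sum_qq_eq_rho: "(\<Sum>i=1..n. qq S i) = rho n"
proof -
  have "(\<Sum>i=1..n. real (card {v\<in>S. i \<in> fst v})) = (\<Sum>i=1..n. \<Sum>v\<in>S. if i \<in> fst v then 1 else 0)"
    using finite_subset_Vset by (simp add: sum.inter_filter[symmetric])
  also have "\<dots> = (\<Sum>v\<in>S. \<Sum>i=1..n. if i \<in> fst v then 1 else 0)"
    by (rule sum.swap)
  also have "\<dots> = (\<Sum>v\<in>S. real (card {i\<in>{1..n}. i \<in> fst v}))"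
    by (simp add: sum.inter_filter[symmetric])
  also have "\<dots> = (\<Sum>v\<in>S. real (rho n))"
  proof (intro sum.cong refl)
    fix v assume "v \<in> S"
    then have "fst v \<subseteq> {1..n}" "card (fst v) = rho n" using S_sub mem_VsetD by blast+
    moreover from this have "{i\<in>{1..n}. i \<in> fst v} = fst v" by auto
    ultimately show "real (card {i\<in>{1..n}. i \<in> fst v}) = real (rho n)" by simp
  qed
  finally show ?thesis using S_ne finite_subset_Vset
    by (simp add: qq_pmf_of_set[OF finite_subset_Vset S_ne] sum_divide_distrib[symmetric])
qed

lemma twice_beta_le:
  assumes "0 \<le> eps1"
  shows "2 * beta S i \<le> bin_H (qq S i) - alpha S i
    + (if good eps1 A S i then 2 * log 2 (card A) * qq S i else 0) + eps1 * qq S i"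
proof -
  have alpha: "alpha S i \<le> bin_H (qq S i)" by (rule alpha_le_bin_H[OF finite_subset_Vset S_ne])
  have beta: "beta S i \<le> qq S i * log 2 (card A)" by (rule beta_le_qq_log_card)
  have "0 \<le> eps1 * qq S i" using assms qq_nonneg by (rule mult_nonneg_nonneg)
  \<comment> \<open>A bad index has either a small alpha (then use beta) or a small beta.\<close>
  then show ?thesis
    using alpha beta unfolding good_def by (auto simp: algebra_simps)
qed

lemma sum_beta_le_good_mass:
  assumes "0 \<le> eps1"
  shows "(\<Sum>i=1..n. beta S i) \<le> (\<Sum>i=1..n. bin_H (qq S i)) - log 2 (card S)
    + 2 * log 2 (card A) * (\<Sum>i\<in>{i\<in>{1..n}. good eps1 A S i}. qq S i) + eps1 * rho n"
proof -
  let ?a = "log 2 (card A)"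
  have "2 * (\<Sum>i=1..n. beta S i) \<le> (\<Sum>i=1..n. bin_H (qq S i) - alpha S i
      + (if good eps1 A S i then 2 * ?a * qq S i else 0) + eps1 * qq S i)"
    unfolding sum_distrib_left using twice_beta_le[OF assms] by (rule sum_mono)
  also have "\<dots> = (\<Sum>i=1..n. bin_H (qq S i)) - (\<Sum>i=1..n. alpha S i)
      + (\<Sum>i=1..n. if good eps1 A S i then 2 * ?a * qq S i else 0) + eps1 * (\<Sum>i=1..n. qq S i)"
    by (simp add: sum.distrib sum_subtractf sum_distrib_left)
  also have "(\<Sum>i=1..n. if good eps1 A S i then 2 * ?a * qq S i else 0)
      = 2 * ?a * (\<Sum>i\<in>{i\<in>{1..n}. good eps1 A S i}. qq S i)"
    by (simp only: sum.inter_filter[OF finite_atLeastAtMost, symmetric] sum_distrib_left[symmetric])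
  finally show ?thesis
    using sum_alpha_plus_beta_eq_log_card sum_qq_eq_rho by (simp add: sum.distrib)
qed

lemma sum_bin_H_qq_le:
  assumes "0 < rho n" "rho n < n"
  shows "(\<Sum>i=1..n. bin_H (qq S i)) \<le> n * bin_H (rho n / n)"
proof -
  have "0 < real (rho n) / real n" "real (rho n) / real n < 1"
    using assms by (simp_all add: divide_less_eq)
  moreover have "(\<Sum>i\<in>{1..n}. qq S i) = card {1..n} * (rho n / n)"
    using sum_qq_eq_rho assms by simp
  ultimately have "(\<Sum>i\<in>{1..n}. bin_H (qq S i)) \<le> card {1..n} * bin_H (rho n / n)"
    by (intro sum_bin_H_le) (simp_all add: qq_nonneg qq_le_one)
  then show ?thesis by simp
qed

end

section \<open>Binomial coefficients and entropy\<close>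

definition binomial_term :: "nat \<Rightarrow> real \<Rightarrow> nat \<Rightarrow> real" where
  "binomial_term n p k = real (n choose k) * p ^ k * (1 - p) ^ (n - k)"

lemma binomial_term_Suc:
  assumes "k < n"
  shows "binomial_term n p (Suc k) * (real (Suc k) * (1 - p)) = binomial_term n p k * (real (n - k) * p)"
proof -
  have "Suc k * (n choose Suc k) = (n - k) * (n choose k)"
    by (metis binomial_absorption binomial_absorb_comp)
  then have c: "real (Suc k) * real (n choose Suc k) = real (n - k) * real (n choose k)"
    by (metis of_nat_mult)
  have e: "(1 - p) ^ (n - k) = (1 - p) * (1 - p) ^ (n - Suc k)"
    using assms by (simp flip: power_Suc add: Suc_diff_Suc)
  show ?thesis
    unfolding binomial_term_def e power_Suc using c by (simp del: of_nat_Suc add: ac_simps)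
qed

lemma binomial_term_mono:
  fixes n r k :: nat
  defines "p \<equiv> real r / real n"
  assumes "0 < r" "r < n"
  shows "k < r \<Longrightarrow> binomial_term n p k \<le> binomial_term n p (Suc k)"
    and "r \<le> k \<Longrightarrow> k < n \<Longrightarrow> binomial_term n p (Suc k) \<le> binomial_term n p k"
proof -
  let ?t = "binomial_term n p"
  have p: "0 < p" "p < 1" using assms(2,3) unfolding p_def by (auto simp: divide_less_eq)
  have t0: "0 \<le> ?t k" unfolding binomial_term_def using p by simp
  have ratio: "real (n - k) * p - real (Suc k) * (1 - p) = real r - real (Suc k) + p" if "k < n"
    using that assms(3) unfolding p_def by (simp add: of_nat_diff field_simps)
  show "?t k \<le> ?t (Suc k)" if "k < r"
  proof -
    have "?t k * (real (Suc k) * (1 - p)) \<le> ?t k * (real (n - k) * p)"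
      using ratio that assms(3) p t0 by (intro mult_left_mono) auto
    then show ?thesis unfolding binomial_term_Suc[OF order.strict_trans[OF that assms(3)], symmetric]
      by (rule mult_right_le_imp_le) (use p in simp)
  qed
  show "?t (Suc k) \<le> ?t k" if "r \<le> k" "k < n"
  proof -
    have "?t k * (real (n - k) * p) \<le> ?t k * (real (Suc k) * (1 - p))"
      using ratio that p t0 by (intro mult_left_mono) auto
    then show ?thesis unfolding binomial_term_Suc[OF that(2), symmetric]
      by (rule mult_right_le_imp_le) (use p in simp)
  qed
qed

lemma binomial_term_le_mode:
  assumes "0 < r" "r < n" "k \<le> n"
  shows "binomial_term n (r / n) k \<le> binomial_term n (r / n) r"
proof (cases "k \<le> r")
  case True
  then show ?thesis
  proof (induction k rule: inc_induct)
    case (step m)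
    then show ?case using binomial_term_mono(1)[OF assms(1,2), of m] by simp
  qed simp
next
  case False
  then have "r \<le> k" by simp
  then show ?thesis
  proof (induction k rule: dec_induct)
    case (step m)
    then show ?case using binomial_term_mono(2)[OF assms(1,2), of m] assms(3) by simp
  qed simp
qed

text \<open>The r-th term is the largest of the n + 1 terms of (p + (1 - p))^n = 1 when p = r / n.\<close>
lemma log_binomial_ge_entropy:
  assumes "0 < r" "r < n"
  shows "real n * bin_H (real r / real n) - log 2 (real n + 1) \<le> log 2 (real (n choose r))"
proof -
  define p where "p = real r / real n"
  have p: "0 < p" "p < 1" using assms unfolding p_def by (auto simp: divide_less_eq)
  define t where "t = binomial_term n p r"
  have t0: "0 < t" unfolding t_def binomial_term_def using p assms by simp
  have "1 = (p + (1 - p)) ^ n" by simp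
  also have "\<dots> = (\<Sum>k\<le>n. binomial_term n p k)"
    unfolding binomial_term_def by (rule binomial_ring)
  also have "\<dots> \<le> (\<Sum>k\<le>n. t)"
    unfolding t_def p_def using assms by (intro sum_mono binomial_term_le_mode) auto
  finally have "1 \<le> (real n + 1) * t" by (simp add: add.commute)
  then have "0 \<le> log 2 ((real n + 1) * t)"
    using t0 by simp
  then have "0 \<le> log 2 (real n + 1) + log 2 t"
    using t0 by (simp add: log_mult)
  moreover have "log 2 t = log 2 (real (n choose r)) + real r * log 2 p + real (n - r) * log 2 (1 - p)"
    unfolding t_def binomial_term_def using p assms by (simp add: log_mult log_nat_power)
  moreover have "real n * bin_H p = - real r * log 2 p - real (n - r) * log 2 (1 - p)"
    unfolding bin_H_def p_def using assms by (simp add: of_nat_diff field_simps)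
  ultimately show ?thesis unfolding p_def by linarith
qed

lemma log_binomial_ge:
  assumes "0 < r" "r \<le> n"
  shows "real r * (log 2 (real n) - log 2 (real r)) \<le> log 2 (real (n choose r))"
proof -
  have "(real n / real r) ^ r \<le> real (n choose r)"
    using binomial_ge_n_over_k_pow_k[OF assms(2)] by simp
  then have "log 2 ((real n / real r) ^ r) \<le> log 2 (real (n choose r))"
    using assms by (subst log_le_cancel_iff) auto
  then show ?thesis using assms by (simp add: log_nat_power log_divide)
qed

lemma log_binomial_le:
  assumes "0 < n" "r \<le> n"
  shows "log 2 (real (n choose r)) \<le> real r * log 2 (real n)"
proof -
  have "real (n choose r) \<le> real n ^ r"
    using binomial_le_pow[OF assms(2)] by (metis of_nat_le_iff of_nat_power)
  then have "log 2 (real (n choose r)) \<le> log 2 (real n ^ r)"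
    using assms by (subst log_le_cancel_iff) auto
  then show ?thesis using assms by (simp add: log_nat_power)
qed

lemma log2_sqrt: "0 < x \<Longrightarrow> log 2 (sqrt x) = log 2 x / 2"
  by (simp add: powr_half_sqrt[symmetric] log_powr)

section \<open>Asymptotics\<close>

lemma eventually_rho_bounds:
  "\<forall>\<^sub>F n in sequentially. 0 < rho n \<and> 2 * rho n < n \<and>
     sqrt (real n) \<le> real (rho n) \<and> real (rho n) \<le> sqrt (real n) * log 2 (log 2 (real n))"
proof -
  have "\<forall>\<^sub>F n in sequentially. 2 \<le> log 2 (log 2 (real n)) \<and> 1 \<le> sqrt (real n) \<and>
      sqrt (real n) * log 2 (log 2 (real n)) < real n / 2"
    by (intro eventually_conj; real_asymp)
  then show ?thesis
  proof eventually_elim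
    case (elim n)
    define x where "x = sqrt (real n) * log 2 (log 2 (real n))"
    have "2 * sqrt (real n) \<le> x" unfolding x_def using elim by (simp add: mult.commute mult_right_mono)
    moreover have "x - 1 < real (rho n)" "real (rho n) \<le> x"
      using \<open>2 * sqrt (real n) \<le> x\<close> elim unfolding rho_def x_def[symmetric] by linarith+
    ultimately show ?case using elim unfolding x_def by linarith
  qed
qed

lemma eventually_log_kk_bounds:
  "\<forall>\<^sub>F n in sequentially.
     real (rho n) * (log 2 (real n) / 2 - log 2 (log 2 (log 2 (real n)))) \<le> log 2 (real (kk n)) \<and>
     log 2 (real (kk n)) \<le> real (rho n) * log 2 (real n)"
proof -
  have "\<forall>\<^sub>F n in sequentially. 0 < log 2 (log 2 (real n))" by real_asymp
  with eventually_rho_bounds show ?thesis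
  proof eventually_elim
    case (elim n)
    have r: "0 < rho n" "rho n \<le> n" using elim by linarith+
    then have n: "0 < real n" by simp
    have "log 2 (real (rho n)) \<le> log 2 (sqrt (real n) * log 2 (log 2 (real n)))"
      using elim r by simp
    also have "\<dots> = log 2 (real n) / 2 + log 2 (log 2 (log 2 (real n)))"
      using log_mult[of 2 "sqrt (real n)" "log 2 (log 2 (real n))"] elim(2) n by (simp add: log2_sqrt)
    finally have "real (rho n) * (log 2 (real n) / 2 - log 2 (log 2 (log 2 (real n))))
        \<le> real (rho n) * (log 2 (real n) - log 2 (real (rho n)))"
      using r by (intro mult_left_mono) auto
    then have "real (rho n) * (log 2 (real n) / 2 - log 2 (log 2 (log 2 (real n))))
        \<le> log 2 (real (kk n))"
      using log_binomial_ge[OF r] unfolding kk_def by linarith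
    moreover have "0 < n" using r by linarith
    ultimately show ?case using log_binomial_le[of n "rho n"] r unfolding kk_def by simp
  qed
qed

lemma eventually_log_kk_ge:
  "\<forall>\<^sub>F n in sequentially. sqrt (real n) \<le> log 2 (real (kk n)) \<and>
     49 / 100 * real (rho n) * log 2 (real n) \<le> log 2 (real (kk n))"
proof -
  have "\<forall>\<^sub>F n in sequentially. 1 \<le> log 2 (real n) / 2 - log 2 (log 2 (log 2 (real n))) \<and>
      log 2 (log 2 (log 2 (real n))) \<le> log 2 (real n) / 100"
    by (intro eventually_conj; real_asymp)
  with eventually_rho_bounds eventually_log_kk_bounds show ?thesis
  proof eventually_elim
    case (elim n)
    let ?c = "log 2 (real n) / 2 - log 2 (log 2 (log 2 (real n)))"
    have "real (rho n) * 1 \<le> real (rho n) * ?c"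
      "real (rho n) * (49 / 100 * log 2 (real n)) \<le> real (rho n) * ?c"
      using elim by (intro mult_left_mono; simp)+
    moreover have "49 / 100 * real (rho n) * log 2 (real n) = real (rho n) * (49 / 100 * log 2 (real n))"
      by simp
    ultimately show ?case using elim by linarith
  qed
qed

text \<open>With a = log |A| the numerator is log |V| (see card_Vset); the ratio measures the loss
  eps0 log |V| / log log |V| in the size assumption on S.\<close>
lemma eventually_log_card_Vset_ratio_le:
  fixes a :: real
  assumes "0 \<le> a"
  shows "\<forall>\<^sub>F n in sequentially.
    (log 2 (real (kk n)) + real (rho n) * a) / log 2 (log 2 (real (kk n)) + real (rho n) * a)
      \<le> 9 / 4 * real (rho n)"
proof -
  have "\<forall>\<^sub>F n in sequentially. 8 * a \<le> log 2 (real n)"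
  proof -
    have "filterlim (\<lambda>n. log 2 (real n)) at_top sequentially" by real_asymp
    then show ?thesis by (simp add: filterlim_at_top)
  qed
  moreover have "\<forall>\<^sub>F n in sequentially. 1 \<le> sqrt (real n) \<and> 2 \<le> log 2 (real n)"
    by (intro eventually_conj; real_asymp)
  ultimately show ?thesis using eventually_log_kk_bounds eventually_log_kk_ge
  proof eventually_elim
    case (elim n)
    let ?l = "log 2 (real n)" and ?r = "real (rho n)"
    define V where "V = log 2 (real (kk n)) + ?r * a"
    have "0 \<le> ?r * a" using assms by simp
    then have V: "sqrt (real n) \<le> V" "V \<le> ?r * (?l + a)"
      using elim unfolding V_def by (auto simp: algebra_simps)
    have n: "0 < real n" using elim by auto
    then have "0 < sqrt (real n)" by simp
    moreover have "0 < V" using V(1) calculation by linarith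
    ultimately have "log 2 (sqrt (real n)) \<le> log 2 V"
      using V(1) by simp
    then have "?l / 2 \<le> log 2 V" using n by (simp add: log2_sqrt)
    moreover have "0 \<le> ?r * (?l + a)" "0 < ?l / 2"
      using V \<open>0 < sqrt (real n)\<close> elim by linarith+
    ultimately have "V / log 2 V \<le> ?r * (?l + a) / (?l / 2)"
      using V(2) by (intro frac_le) auto
    also have "\<dots> = ?r * (2 + 2 * (a / ?l))"
      using elim by (simp add: field_simps)
    also have "\<dots> \<le> ?r * (9 / 4)"
    proof -
      have "a / ?l \<le> 1 / 8" using elim by (simp add: divide_le_eq mult.commute)
      then have "2 + 2 * (a / ?l) \<le> 9 / 4" by linarith
      then show ?thesis by (rule mult_left_mono) simp
    qed
    finally show ?case unfolding V_def by (simp add: mult.commute)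
  qed
qed

lemma eventually_entropy_gap:
  fixes e :: real
  assumes "0 < e"
  shows "\<forall>\<^sub>F n in sequentially.
    real n * bin_H (real (rho n) / real n) - log 2 (real (kk n)) \<le> e * real (rho n)"
proof -
  have "\<forall>\<^sub>F n in sequentially. log 2 (real n + 1) \<le> e * sqrt (real n)"
    using assms by real_asymp
  with eventually_rho_bounds show ?thesis
  proof eventually_elim
    case (elim n)
    have "0 < rho n" "rho n < n" using elim by linarith+
    then show ?case
      using log_binomial_ge_entropy[of "rho n" n] elim assms
        mult_left_mono[of "sqrt (real n)" "real (rho n)" e]
      unfolding kk_def by linarith
  qed
qed

lemma eventually_entropy_budget:
  fixes eps1 a :: real
  assumes "0 < eps1" "0 \<le> a"
  shows "\<forall>\<^sub>F n in sequentially. 0 < rho n \<and> rho n < n \<and> 2 \<le> log 2 (real (kk n)) \<and>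
    real n * bin_H (real (rho n) / real n) - log 2 (real (kk n))
      + eps1 / 5 * ((log 2 (real (kk n)) + real (rho n) * a) /
          log 2 (log 2 (real (kk n)) + real (rho n) * a))
      + 7 / 5 * eps1 * real (rho n)
    \<le> 5 * eps1 * log 2 (real (kk n)) / log 2 (real n)"
proof -
  have "0 < 3 / 5 * eps1" using assms(1) by simp
  note gap = eventually_entropy_gap[OF this]
  have "\<forall>\<^sub>F n in sequentially. 2 \<le> sqrt (real n) \<and> 0 < log 2 (real n)"
    by (intro eventually_conj; real_asymp)
  with eventually_rho_bounds eventually_log_kk_ge eventually_log_card_Vset_ratio_le[OF assms(2)] gap
  show ?thesis
  proof eventually_elim
    case (elim n)
    let ?r = "real (rho n)" and ?l = "log 2 (real n)" and ?k = "log 2 (real (kk n))"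
    have "5 * eps1 * (49 / 100 * ?r * ?l) / ?l \<le> 5 * eps1 * ?k / ?l"
      using elim assms(1) by (intro divide_right_mono mult_left_mono) auto
    then have K: "49 / 20 * eps1 * ?r \<le> 5 * eps1 * ?k / ?l"
      using elim by simp
    have V: "eps1 / 5 * ((?k + ?r * a) / log 2 (?k + ?r * a)) \<le> eps1 / 5 * (9 / 4 * ?r)"
      using elim assms(1) by (intro mult_left_mono) auto
    have basic: "0 < rho n" "rho n < n" "2 \<le> ?k" using elim by auto
    \<comment> \<open>K, V and the entropy gap account for 49/20, 9/20 and 3/5 of eps1 rho n, leaving 7/5.\<close>
    show ?case by (insert K V elim(4) basic, intro conjI; linarith)
  qed
qed

lemma log_card_ge_of_kprime:
  fixes eps0 e :: real
  assumes "finite A" "A \<noteq> {}" "eps0 \<le> e" "2 \<le> log 2 (real (kk n))"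
    and "kprime eps0 n A \<le> card S"
  defines "LV \<equiv> log 2 (real (kk n)) + real (rho n) * log 2 (real (card A))"
  shows "0 < card S" "log 2 (real (kk n)) - e * (LV / log 2 LV) \<le> log 2 (card S)"
proof -
  let ?V = "real (card (Vset n A))"
  have k: "0 < real (kk n)" using assms(4) by (cases "kk n = 0") (auto simp: log_def)
  have A: "0 < real (card A)" using assms(1,2) by (simp add: card_gt_0_iff)
  then have a: "0 \<le> log 2 (real (card A))" using assms(1,2) by (simp add: Suc_le_eq card_gt_0_iff)
  have V: "0 < ?V" and logV: "log 2 ?V = LV"
    using k A unfolding card_Vset[OF assms(1)] LV_def by (simp_all add: log_mult log_nat_power)
  have "0 \<le> real (rho n) * log 2 (real (card A))" using a by simp
  then have "2 \<le> LV" using assms(4) unfolding LV_def by linarith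
  then have LL: "1 \<le> log 2 LV" by simp
  have kprime: "kprime eps0 n A = real (kk n) * ?V powr (- eps0 / log 2 LV)"
    unfolding kprime_def logV ..
  then have "0 < kprime eps0 n A" using k V by simp
  then show "0 < card S" using assms(5) by linarith
  have "log 2 (kprime eps0 n A) = log 2 (real (kk n)) - eps0 * (LV / log 2 LV)"
    unfolding kprime using k V by (simp add: log_mult log_powr logV)
  also have "\<dots> \<ge> log 2 (real (kk n)) - e * (LV / log 2 LV)"
    using assms(3) \<open>2 \<le> LV\<close> LL by (intro diff_left_mono mult_right_mono) auto
  moreover have "log 2 (kprime eps0 n A) \<le> log 2 (card S)"
    using assms(5) \<open>0 < kprime eps0 n A\<close> by simp
  ultimately show "log 2 (real (kk n)) - e * (LV / log 2 LV) \<le> log 2 (card S)" by linarith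
qed

lemma sum_power2_ge_of_sum_ge:
  fixes q :: "'i \<Rightarrow> real"
  assumes "finite G" "card G \<le> n" "0 \<le> c" "c \<le> b * (\<Sum>i\<in>G. q i)"
  shows "c\<^sup>2 / (real n * b\<^sup>2) \<le> (\<Sum>i\<in>G. (q i)\<^sup>2)"
proof (cases "real n * b\<^sup>2 = 0")
  case False
  then have pos: "0 < real n * b\<^sup>2" by simp
  have "c\<^sup>2 \<le> (b * (\<Sum>i\<in>G. q i))\<^sup>2" using assms(3,4) by (intro power_mono) auto
  also have "\<dots> = b\<^sup>2 * (\<Sum>i\<in>G. q i)\<^sup>2" by (simp add: power_mult_distrib)
  also have "\<dots> \<le> b\<^sup>2 * ((\<Sum>i\<in>G. (q i)\<^sup>2) * card G)"
    by (intro mult_left_mono sum_squared_le_sum_of_squares) auto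
  also have "\<dots> \<le> b\<^sup>2 * ((\<Sum>i\<in>G. (q i)\<^sup>2) * n)"
    using assms(2) by (intro mult_left_mono) (auto simp: sum_nonneg)
  finally show ?thesis using pos by (simp add: divide_le_eq mult_ac)
next
  case True
  then show ?thesis by (simp only: div_by_0) (simp add: sum_nonneg)
qed

lemma good_mass_ge:
  fixes eps0 eps1 :: real
  assumes S: "S \<subseteq> Vset n A" and A: "finite A" "A \<noteq> {}" and eps: "0 < eps1" "eps0 \<le> eps1 / 5"
    and card_S: "kprime eps0 n A \<le> card S"
    and beta: "5 * eps1 * log 2 (real (kk n)) / log 2 (real n) < (\<Sum>i=1..n. beta S i)"
    and budget: "0 < rho n \<and> rho n < n \<and> 2 \<le> log 2 (real (kk n)) \<and>
      real n * bin_H (real (rho n) / real n) - log 2 (real (kk n))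
      + eps1 / 5 * ((log 2 (real (kk n)) + real (rho n) * log 2 (card A)) /
          log 2 (log 2 (real (kk n)) + real (rho n) * log 2 (card A)))
      + 7 / 5 * eps1 * real (rho n) \<le> 5 * eps1 * log 2 (real (kk n)) / log 2 (real n)"
  shows "eps1 * real (rho n) / 5 \<le> log 2 (card A) * (\<Sum>i\<in>{i\<in>{1..n}. good eps1 A S i}. qq S i)"
proof -
  have "0 < card S" and log_card_S: "log 2 (real (kk n)) - eps1 / 5 * ((log 2 (real (kk n))
      + real (rho n) * log 2 (card A)) / log 2 (log 2 (real (kk n)) + real (rho n) * log 2 (card A)))
      \<le> log 2 (card S)"
    using log_card_ge_of_kprime[OF A eps(2) _ card_S] budget by auto
  then have "S \<noteq> {}" by auto
  have "(\<Sum>i=1..n. bin_H (qq S i)) \<le> n * bin_H (rho n / n)"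
    using sum_bin_H_qq_le[OF S A(1) \<open>S \<noteq> {}\<close>] budget by auto
  moreover have "(\<Sum>i=1..n. beta S i) \<le> (\<Sum>i=1..n. bin_H (qq S i)) - log 2 (card S)
      + 2 * log 2 (card A) * (\<Sum>i\<in>{i\<in>{1..n}. good eps1 A S i}. qq S i) + eps1 * rho n"
    using sum_beta_le_good_mass[OF S A(1) \<open>S \<noteq> {}\<close>] eps(1) by simp
  ultimately show ?thesis using beta log_card_S budget by linarith
qed

theorem mainTheorem3:
  fixes eps1 eps0 :: real and A :: "'a set"
  assumes "eps1 > 0" and "0 < eps0" and "eps0 \<le> eps1 / 5"
    and "finite A" and "A \<noteq> {}"
  shows "\<exists>N::nat. \<forall>n\<ge>N. \<forall>S.
     S \<subseteq> Vset n A \<and> real (card S) \<ge> kprime eps0 n A \<and>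
     (\<Sum>i=1..n. beta S i) > 5 * eps1 * log 2 (real (kk n)) / log 2 (real n)
     \<longrightarrow> (\<Sum>i\<in>{i\<in>{1..n}. good eps1 A S i}. (qq S i)\<^sup>2)
          \<ge> (eps1 * real (rho n) / 5)\<^sup>2 / (real n * (log 2 (real (card A)))\<^sup>2)"
proof -
  have "0 \<le> log 2 (real (card A))" using assms(4,5) by (simp add: Suc_le_eq card_gt_0_iff)
  from eventually_entropy_budget[OF assms(1) this]
  show ?thesis unfolding eventually_sequentially[symmetric]
  proof eventually_elim
    case (elim n)
    show ?case
    proof (intro allI impI, elim conjE)
      fix S assume "S \<subseteq> Vset n A" "kprime eps0 n A \<le> real (card S)"
        "5 * eps1 * log 2 (real (kk n)) / log 2 (real n) < (\<Sum>i=1..n. beta S i)"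
      from good_mass_ge[OF this(1) assms(4,5,1,3) this(2,3) elim]
      have "eps1 * real (rho n) / 5 \<le> log 2 (card A) * (\<Sum>i\<in>{i\<in>{1..n}. good eps1 A S i}. qq S i)" .
      moreover have "card {i\<in>{1..n}. good eps1 A S i} \<le> card {1..n}" by (rule card_mono) auto
      ultimately show "(eps1 * real (rho n) / 5)\<^sup>2 / (real n * (log 2 (real (card A)))\<^sup>2)
          \<le> (\<Sum>i\<in>{i\<in>{1..n}. good eps1 A S i}. (qq S i)\<^sup>2)"
        using assms(1) by (intro sum_power2_ge_of_sum_ge) simp_all
    qed
  qed
qed

end
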